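(* Let $\rho$ be a density operator on a $d$-dimensional complex Hilbert space $\mathbb{H}$, let $\{\ket{a_i}\}_{i=1}^d$ be an orthonormal basis and $\{\ket{b_k}\}_{k=1}^d$ an orthonormal basis mutually unbiased with respect to $\{\ket{a_i}\}$ (i.e. $|\langle a_i|b_k\rangle|^2 = 1/d$ for all $i,k$). Define the extended KD distribution $Q^\star_{i,j,k} = \langle a_j|b_k\rangle\langle b_k|a_i\rangle\langle a_i|\rho|a_j\rangle$, the moments $r_n = \sum_{i,j,k} (Q^\star_{i,j,k})^n$, and for a positive integer $m$ the $(m+1)\times(m+1)$ Hankel matrix $H_m(\mathbf{r})$ with entries $[H_m(\mathbf{r})]_{ij} = r_{i+j+1}$, $i,j\in\{0,\dots,m\}$. If for some positive integer $m$ the inequality $-\det[H_m(\mathbf{r})] > 0$ holds (in particular $\det[H_m(\mathbf{r})]$ is real), then $\rho$ has nonzero $\ell_1$-norm of coherence in the basis $\{\ket{a_i}\}$, i.e. $\mathcal{C}_{\ell_1}(\rho,\{\ket{a_i}\}) := \sum_{i\neq j} |\langle a_i|\rho|a_j\rangle| > 0$.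
   Context: The $\ell_1$-norm of coherence of $\rho$ with respect to the basis $\{\ket{a_i}\}$ is the sum of the absolute values of the off-diagonal entries of $\rho$ in that basis. *)

theory Defs
  imports "HOL-Analysis.Analysis"
begin

text \<open>Hilbert space: complex^'n, with 'n a finite type of cardinality d.
  Inner product antilinear in the first argument (Dirac bra-ket convention).\<close>
definition braket :: "complex^'n \<Rightarrow> complex^'n \<Rightarrow> complex" where
  "braket x y = (\<Sum>i\<in>UNIV. cnj (x $ i) * y $ i)"

definition density_operator :: "complex^'n^'n \<Rightarrow> bool" where
  "density_operator \<rho> \<longleftrightarrow>
     (\<forall>i j. \<rho> $ i $ j = cnj (\<rho> $ j $ i)) \<and>
     (\<forall>v. Im (braket v (\<rho> *v v)) = 0 \<and> Re (braket v (\<rho> *v v)) \<ge> 0) \<and>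
     (\<Sum>i\<in>UNIV. \<rho> $ i $ i) = 1"

definition orthonormal_basis :: "('n::finite \<Rightarrow> complex^'n) \<Rightarrow> bool" where
  "orthonormal_basis a \<longleftrightarrow> (\<forall>i j. braket (a i) (a j) = (if i = j then 1 else 0))"

definition mutually_unbiased :: "('n::finite \<Rightarrow> complex^'n) \<Rightarrow> ('n \<Rightarrow> complex^'n) \<Rightarrow> bool" where
  "mutually_unbiased a b \<longleftrightarrow> (\<forall>i k. (cmod (braket (a i) (b k)))^2 = 1 / real CARD('n))"

definition KD_ext :: "complex^'n^'n \<Rightarrow> ('n \<Rightarrow> complex^'n) \<Rightarrow> ('n \<Rightarrow> complex^'n) \<Rightarrow> 'n \<Rightarrow> 'n \<Rightarrow> 'n \<Rightarrow> complex" where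
  "KD_ext \<rho> a b i j k = braket (a j) (b k) * braket (b k) (a i) * braket (a i) (\<rho> *v a j)"

definition KD_moment :: "complex^'n^'n \<Rightarrow> ('n::finite \<Rightarrow> complex^'n) \<Rightarrow> ('n \<Rightarrow> complex^'n) \<Rightarrow> nat \<Rightarrow> complex" where
  "KD_moment \<rho> a b n = (\<Sum>i\<in>UNIV. \<Sum>j\<in>UNIV. \<Sum>k\<in>UNIV. (KD_ext \<rho> a b i j k) ^ n)"

definition det_sq :: "nat \<Rightarrow> (nat \<Rightarrow> nat \<Rightarrow> complex) \<Rightarrow> complex" where
  "det_sq m M = (\<Sum>p\<in>{p. p permutes {0..m}}. of_int (sign p) * (\<Prod>i\<in>{0..m}. M i (p i)))"

definition hankel :: "(nat \<Rightarrow> complex) \<Rightarrow> nat \<Rightarrow> nat \<Rightarrow> complex" where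
  "hankel r i j = r (i + j + 1)"

definition coherence_l1 :: "complex^'n^'n \<Rightarrow> ('n::finite \<Rightarrow> complex^'n) \<Rightarrow> real" where
  "coherence_l1 \<rho> a = (\<Sum>i\<in>UNIV. \<Sum>j\<in>UNIV - {i}. cmod (braket (a i) (\<rho> *v a j)))"

end

theory Submission
  imports Defs "Jordan_Normal_Form.Determinant"
begin

(* If the l1-coherence of rho vanishes, rho is diagonal in the basis a, with diagonal p_i >= 0.
   Mutual unbiasedness then collapses the extended KD distribution to Q_{ijk} = delta_ij p_i / d,
   so r_{n+1} = sum_i p_i (p_i / d)^n: the Hankel matrix H_m(r) is the moment matrix of the
   positive discrete measure sum_i p_i delta_{p_i/d}, and such matrices have nonnegative
   determinant. *)

definition vandermonde_mat :: "nat \<Rightarrow> (nat \<Rightarrow> 'a::comm_ring_1) \<Rightarrow> 'a mat" where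
  "vandermonde_mat n y = mat n n (\<lambda>(i, j). y i ^ j)"

definition moment_mat :: "nat \<Rightarrow> 'l set \<Rightarrow> ('l \<Rightarrow> 'a::comm_ring_1) \<Rightarrow> ('l \<Rightarrow> 'a) \<Rightarrow> 'a mat" where
  "moment_mat n L c x = mat n n (\<lambda>(i, j). \<Sum>l\<in>L. c l * x l ^ (i + j))"

lemma det_vandermonde_mat:
  "det (vandermonde_mat n y) = (\<Sum>p | p permutes {0..<n}. signof p * (\<Prod>i = 0..<n. y i ^ p i))"
  unfolding vandermonde_mat_def
  by (subst det_def'[of _ n])
    (auto intro!: sum.cong[OF refl] prod.cong[OF refl] simp: permutes_in_image)

lemma det_vandermonde_mat_col:
  "det (vandermonde_mat n y) = (\<Sum>p | p permutes {0..<n}. signof p * (\<Prod>j = 0..<n. y (p j) ^ j))"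
  unfolding vandermonde_mat_def
  by (subst det_col[of _ n])
    (auto intro!: sum.cong[OF refl] prod.cong[OF refl] simp: permutes_in_image atLeast0LessThan)

lemma det_vandermonde_mat_permute:
  assumes "\<sigma> permutes {0..<n}"
  shows "det (vandermonde_mat n (y \<circ> \<sigma>)) = signof \<sigma> * det (vandermonde_mat n y)"
proof -
  have "det (vandermonde_mat n (y \<circ> \<sigma>)) = det (mat n n (\<lambda>(i, j). vandermonde_mat n y $$ (\<sigma> i, j)))"
    using permutes_in_image[OF assms]
    by (intro arg_cong[where f = det] eq_matI) (auto simp: vandermonde_mat_def)
  also have "\<dots> = signof \<sigma> * det (vandermonde_mat n y)"
    by (rule det_permute_rows[OF _ assms]) (simp add: vandermonde_mat_def)
  finally show ?thesis .
qed

lemma det_moment_mat_expand: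
  assumes "finite L"
  shows "det (moment_mat n L c x) =
    (\<Sum>f\<in>{0..<n} \<rightarrow>\<^sub>E L.
      (\<Prod>i = 0..<n. c (f i) * x (f i) ^ i) * det (vandermonde_mat n (x \<circ> f)))"
proof -
  let ?P = "{p. p permutes {0..<n}}"
  have "det (moment_mat n L c x) =
      (\<Sum>p\<in>?P. signof p * (\<Prod>i = 0..<n. \<Sum>l\<in>L. c l * x l ^ i * x l ^ p i))"
    unfolding moment_mat_def
    by (subst det_def'[of _ n])
      (auto intro!: sum.cong[OF refl] prod.cong[OF refl] simp: permutes_in_image power_add mult.assoc)
  also have "\<dots> = (\<Sum>p\<in>?P. signof p * (\<Sum>f\<in>{0..<n} \<rightarrow>\<^sub>E L.
      \<Prod>i = 0..<n. c (f i) * x (f i) ^ i * x (f i) ^ p i))"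
    by (simp add: prod_sum_PiE assms)
  also have "\<dots> = (\<Sum>p\<in>?P. \<Sum>f\<in>{0..<n} \<rightarrow>\<^sub>E L.
      (\<Prod>i = 0..<n. c (f i) * x (f i) ^ i) * (signof p * (\<Prod>i = 0..<n. x (f i) ^ p i)))"
    by (simp add: sum_distrib_left prod.distrib mult_ac)
  also have "\<dots> = (\<Sum>f\<in>{0..<n} \<rightarrow>\<^sub>E L.
      (\<Prod>i = 0..<n. c (f i) * x (f i) ^ i) * det (vandermonde_mat n (x \<circ> f)))"
    by (subst sum.swap) (simp add: det_vandermonde_mat sum_distrib_left)
  finally show ?thesis .
qed

lemma sum_PiE_permute:
  assumes "\<sigma> permutes A"
  shows "(\<Sum>f\<in>A \<rightarrow>\<^sub>E B. g (f \<circ> \<sigma>)) = (\<Sum>f\<in>A \<rightarrow>\<^sub>E B. g f)"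
proof (rule sum.reindex_bij_betw)
  have closed: "f \<circ> \<tau> \<in> A \<rightarrow>\<^sub>E B" if "f \<in> A \<rightarrow>\<^sub>E B" "\<tau> permutes A" for f \<tau>
    using that by (auto simp: PiE_iff extensional_def permutes_in_image permutes_not_in)
  show "bij_betw (\<lambda>f. f \<circ> \<sigma>) (A \<rightarrow>\<^sub>E B) (A \<rightarrow>\<^sub>E B)"
    by (rule bij_betwI[where g = "\<lambda>f. f \<circ> inv_into UNIV \<sigma>"])
      (simp_all add: closed assms permutes_inv comp_assoc permutes_inv_o[OF assms])
qed

lemma sum_permutes_signof_moment_weights:
  "(\<Sum>\<sigma> | \<sigma> permutes {0..<n}. signof \<sigma> * (\<Prod>i = 0..<n. c (f (\<sigma> i)) * x (f (\<sigma> i)) ^ i))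
    = (\<Prod>i = 0..<n. c (f i)) * det (vandermonde_mat n (x \<circ> f))"
proof (subst det_vandermonde_mat_col, subst sum_distrib_left, rule sum.cong[OF refl])
  fix \<sigma> assume "\<sigma> \<in> {\<sigma>. \<sigma> permutes {0..<n}}"
  then have "(\<Prod>i = 0..<n. c (f (\<sigma> i))) = (\<Prod>i = 0..<n. c (f i))"
    using prod.permute[of \<sigma> "{0..<n}" "c \<circ> f"] by (simp add: comp_def)
  then show "signof \<sigma> * (\<Prod>i = 0..<n. c (f (\<sigma> i)) * x (f (\<sigma> i)) ^ i) =
      (\<Prod>i = 0..<n. c (f i)) * (signof \<sigma> * (\<Prod>j = 0..<n. (x \<circ> f) (\<sigma> j) ^ j))"
    by (simp add: prod.distrib)
qed

lemma det_moment_mat_nonneg: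
  fixes c x :: "'l \<Rightarrow> 'a::linordered_idom"
  assumes "finite L" and "\<And>l. l \<in> L \<Longrightarrow> c l \<ge> 0"
  shows "det (moment_mat n L c x) \<ge> 0"
proof -
  (* Averaging the expansion over all relabellings f o sigma gives the Heine identity
     n! det M = sum_f (prod_i c (f i)) * det (vandermonde_mat n (x o f))^2. *)
  let ?P = "{\<sigma>. \<sigma> permutes {0..<n}}" and ?F = "{0..<n} \<rightarrow>\<^sub>E L"
  define w where "w f = (\<Prod>i = 0..<n. c (f i) * x (f i) ^ i)" for f
  define V where "V f = det (vandermonde_mat n (x \<circ> f))" for f
  have "of_nat (card ?P) * det (moment_mat n L c x) = (\<Sum>\<sigma>\<in>?P. \<Sum>f\<in>?F. w f * V f)"
    by (simp add: det_moment_mat_expand[OF assms(1)] w_def V_def)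
  also have "\<dots> = (\<Sum>\<sigma>\<in>?P. \<Sum>f\<in>?F. w (f \<circ> \<sigma>) * V (f \<circ> \<sigma>))"
    by (rule sum.cong[OF refl], rule sum_PiE_permute[symmetric]) simp
  also have "\<dots> = (\<Sum>\<sigma>\<in>?P. \<Sum>f\<in>?F. signof \<sigma> * w (f \<circ> \<sigma>) * V f)"
    by (intro sum.cong refl) (simp add: V_def comp_assoc[symmetric] det_vandermonde_mat_permute)
  also have "\<dots> = (\<Sum>f\<in>?F. (\<Sum>\<sigma>\<in>?P. signof \<sigma> * w (f \<circ> \<sigma>)) * V f)"
    by (subst sum.swap) (simp add: sum_distrib_right)
  also have "\<dots> = (\<Sum>f\<in>?F. (\<Prod>i = 0..<n. c (f i)) * (V f)\<^sup>2)"
    by (simp add: w_def V_def sum_permutes_signof_moment_weights power2_eq_square mult.assoc)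
  finally have "of_nat (card ?P) * det (moment_mat n L c x) =
      (\<Sum>f\<in>?F. (\<Prod>i = 0..<n. c (f i)) * (V f)\<^sup>2)" .
  moreover have "(\<Sum>f\<in>?F. (\<Prod>i = 0..<n. c (f i)) * (V f)\<^sup>2) \<ge> 0"
    by (intro sum_nonneg mult_nonneg_nonneg prod_nonneg) (auto simp: PiE_iff assms(2))
  moreover have "card ?P > 0"
    by (metis card_gt_0_iff empty_iff finite_atLeastLessThan finite_permutations
        mem_Collect_eq permutes_id)
  ultimately show ?thesis
    by (metis mult_pos_neg not_le of_nat_0_less_iff)
qed

lemma braket_swap: "braket y x = cnj (braket x y)"
  unfolding braket_def by (simp add: mult.commute)

lemma coherence_l1_nonneg: "coherence_l1 \<rho> a \<ge> 0"
  unfolding coherence_l1_def by (intro sum_nonneg) auto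

lemma coherence_l1_eq_0_iff:
  "coherence_l1 \<rho> a = 0 \<longleftrightarrow> (\<forall>i j. i \<noteq> j \<longrightarrow> braket (a i) (\<rho> *v a j) = 0)"
proof -
  have "coherence_l1 \<rho> a = 0 \<longleftrightarrow> (\<forall>i. \<forall>j\<in>UNIV - {i}. cmod (braket (a i) (\<rho> *v a j)) = 0)"
    unfolding coherence_l1_def by (simp add: sum_nonneg_eq_0_iff sum_nonneg)
  then show ?thesis
    by auto
qed

lemma density_operator_expectation_real:
  assumes "density_operator \<rho>"
  shows "braket v (\<rho> *v v) = of_real (Re (braket v (\<rho> *v v)))"
  using assms unfolding density_operator_def by (simp add: complex_eq_iff)

lemma density_operator_expectation_nonneg:
  assumes "density_operator \<rho>"
  shows "Re (braket v (\<rho> *v v)) \<ge> 0"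
  using assms unfolding density_operator_def by simp

lemma mutually_unbiased_overlap:
  fixes a b :: "'n::finite \<Rightarrow> complex^'n"
  assumes "mutually_unbiased a b"
  shows "braket (a i) (b k) * braket (b k) (a i) = 1 / of_nat CARD('n)"
proof -
  have "braket (a i) (b k) * braket (b k) (a i) = of_real ((cmod (braket (a i) (b k)))\<^sup>2)"
    using complex_norm_square[of "braket (a i) (b k)"] by (simp add: braket_swap[of "b k"])
  with assms show ?thesis
    unfolding mutually_unbiased_def by simp
qed

lemma KD_ext_incoherent:
  fixes a b :: "'n::finite \<Rightarrow> complex^'n"
  assumes "mutually_unbiased a b" and "\<forall>i j. i \<noteq> j \<longrightarrow> braket (a i) (\<rho> *v a j) = 0"
  shows "KD_ext \<rho> a b i j k = (if i = j then braket (a i) (\<rho> *v a i) / of_nat CARD('n) else 0)"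
  using assms mutually_unbiased_overlap[OF assms(1)] unfolding KD_ext_def by auto

lemma KD_moment_Suc_incoherent:
  fixes a b :: "'n::finite \<Rightarrow> complex^'n"
  assumes "mutually_unbiased a b" and "\<forall>i j. i \<noteq> j \<longrightarrow> braket (a i) (\<rho> *v a j) = 0"
  defines "q i \<equiv> braket (a i) (\<rho> *v a i)"
  shows "KD_moment \<rho> a b (Suc n) = (\<Sum>i\<in>UNIV. q i * (q i / of_nat CARD('n)) ^ n)"
proof -
  let ?d = "of_nat CARD('n) :: complex"
  have "KD_ext \<rho> a b i j k ^ Suc n = (if i = j then (q i / ?d) ^ Suc n else 0)" for i j k
    by (simp add: KD_ext_incoherent[OF assms(1,2)] q_def)
  then have "KD_moment \<rho> a b (Suc n) = (\<Sum>i\<in>UNIV. ?d * (q i / ?d) ^ Suc n)"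
    unfolding KD_moment_def by (simp add: if_distrib[of "(*) ?d"] cong: if_cong)
  also have "\<dots> = (\<Sum>i\<in>UNIV. q i * (q i / ?d) ^ n)"
    by simp
  finally show ?thesis .
qed

lemma det_sq_of_real:
  "det_sq m (\<lambda>i j. of_real (R i j)) = of_real (det (mat (Suc m) (Suc m) (\<lambda>(i, j). R i j)))"
proof -
  have "p i < Suc m" if "p permutes {0..m}" "i \<le> m" for p i
    using permutes_in_image[OF that(1), of i] that(2) by simp
  then have "det (mat (Suc m) (Suc m) (\<lambda>(i, j). R i j)) =
      (\<Sum>p | p permutes {0..m}. signof p * (\<Prod>i = 0..m. R i (p i)))"
    by (subst det_def'[of _ "Suc m"])
      (auto intro!: sum.cong[OF refl] prod.cong[OF refl] simp: atLeastLessThanSuc_atLeastAtMost)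
  then show ?thesis
    unfolding det_sq_def by (simp add: of_real_sum of_real_prod)
qed

theorem theorem3:
  fixes \<rho> :: "complex^'n^'n" and a b :: "'n \<Rightarrow> complex^'n" and m :: nat
  assumes "density_operator \<rho>"
    and "orthonormal_basis a" and "orthonormal_basis b"
    and "mutually_unbiased a b"
    and "m \<ge> 1"
    and "Im (det_sq m (hankel (KD_moment \<rho> a b))) = 0"
    and "- Re (det_sq m (hankel (KD_moment \<rho> a b))) > 0"
  shows "coherence_l1 \<rho> a > 0"
proof (rule ccontr)
  assume "\<not> coherence_l1 \<rho> a > 0"
  then have incoherent: "\<forall>i j. i \<noteq> j \<longrightarrow> braket (a i) (\<rho> *v a j) = 0"
    using coherence_l1_nonneg coherence_l1_eq_0_iff by (metis less_eq_real_def)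
  define p where "p i = Re (braket (a i) (\<rho> *v a i))" for i
  define d where "d = real CARD('n)"
  have "braket (a l) (\<rho> *v a l) = of_real (p l)" for l
    unfolding p_def by (rule density_operator_expectation_real[OF assms(1)])
  then have "hankel (KD_moment \<rho> a b) = (\<lambda>i j. of_real (\<Sum>l\<in>UNIV. p l * (p l / d) ^ (i + j)))"
    by (intro ext) (simp add: hankel_def KD_moment_Suc_incoherent[OF assms(4) incoherent] d_def)
  then have "Re (det_sq m (hankel (KD_moment \<rho> a b))) =
      det (moment_mat (Suc m) UNIV p (\<lambda>l. p l / d))"
    by (simp only: det_sq_of_real Re_complex_of_real moment_mat_def)
  moreover have "det (moment_mat (Suc m) UNIV p (\<lambda>l. p l / d)) \<ge> 0"
    using density_operator_expectation_nonneg[OF assms(1)]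
    by (intro det_moment_mat_nonneg) (simp_all add: p_def)
  ultimately show False
    using assms(7) by linarith
qed

end
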